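(* Let $k\colon\mathbb{R}\setminus\{0\}\to[0,\infty)$ satisfy: (a) $k$ is $C^2$ on $\mathbb{R}\setminus\{0\}$ and $(1+t^2)^m k^{(n)}(t)$ is bounded for all $m,n\in\{0,1,2\}$; (b) $k$ is increasing on $(-\infty,0)$ and decreasing on $(0,\infty)$; (c) $k$ is strictly positive on $\mathbb{R}\setminus\{0\}$. Then the function $P_k\colon\mathbb{R}\to\mathbb{R}$ is a strictly increasing homeomorphism of $\mathbb{R}$ onto $\mathbb{R}$.
   Context: Notation: $\tilde{k}(t)=\mathrm{sign}(t)k(t)$; $H_k(z)=z+z\int_{\mathbb{R}}\frac{\tilde{k}(t)}{z-t}\mathrm{d}t$ for $z\in\mathbb{C}^+$; $F_k(x+\mathrm{i}y)=\int_{\mathbb{R}}\frac{|t|k(t)}{(x-t)^2+y^2}\mathrm{d}t$ for $x\in\mathbb{R}$, $y>0$; $v_k(x)$ is the unique $y\in(0,\infty)$ with $F_k(x+\mathrm{i}y)=1$ (it exists and is unique under (a)-(c)); $P_k(x)=H_k(x+\mathrm{i}v_k(x))$ for $x\in\mathbb{R}$ (this is real-valued). *)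

theory Defs
  imports "HOL-Analysis.Analysis"
begin

text \<open>The kernel k is a function real => real; only its values on R minus 0 matter.\<close>

definition ktilde :: "(real \<Rightarrow> real) \<Rightarrow> real \<Rightarrow> real" where
  "ktilde k t = sgn t * k t"

definition Hk :: "(real \<Rightarrow> real) \<Rightarrow> complex \<Rightarrow> complex" where
  "Hk k z = z + z * (LINT t|lborel. complex_of_real (ktilde k t) / (z - complex_of_real t))"

definition Fk :: "(real \<Rightarrow> real) \<Rightarrow> real \<Rightarrow> real \<Rightarrow> real" where
  "Fk k x y = (LINT t|lborel. \<bar>t\<bar> * k t / ((x - t)^2 + y^2))"

definition vk :: "(real \<Rightarrow> real) \<Rightarrow> real \<Rightarrow> real" where
  "vk k x = (THE y. 0 < y \<and> Fk k x y = 1)"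

text \<open>P_k(x) = H_k(x + i v_k(x)), which is real-valued; we take its real part.\<close>
definition Pk :: "(real \<Rightarrow> real) \<Rightarrow> real \<Rightarrow> real" where
  "Pk k x = Re (Hk k (Complex x (vk k x)))"

end

theory Submission
  imports Defs "HOL-Probability.Sinc_Integral"
begin

text \<open>
  Put \<open>W(t) = |t| k(t)\<close> and \<open>D(t) = (x - t)\<^sup>2 + y\<^sup>2\<close>. Then \<open>F\<^sub>k(x,y) = \<integral> W/D\<close> decreases
  strictly in \<open>y\<close>, is at most \<open>\<integral> W / y\<^sup>2\<close>, and exceeds \<open>1\<close> for small \<open>y\<close> because \<open>k\<close> is
  positive and unimodal; so \<open>v\<^sub>k\<close> is well defined, and \<open>P\<^sub>k(x) = x + \<integral> k\<^sup>~ + \<integral> W (x - t)/D\<close>.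
  For \<open>z\<^sub>j = x\<^sub>j + i v\<^sub>k(x\<^sub>j)\<close> let \<open>A = \<integral> W(t) / ((z\<^sub>1 - t)(z\<^sub>2 - t))\<close> and \<open>R = 1 - Re A\<close>.
  Splitting \<open>1/(z\<^sub>1 - t) - 1/(z\<^sub>2 - t) = -(z\<^sub>1 - z\<^sub>2)/((z\<^sub>1 - t)(z\<^sub>2 - t))\<close> into real and
  imaginary parts and using \<open>F\<^sub>k(x\<^sub>j, v\<^sub>k(x\<^sub>j)) = 1\<close> gives
  \<open>(v\<^sub>1 - v\<^sub>2) R = (x\<^sub>1 - x\<^sub>2) Im A\<close> and \<open>(P\<^sub>1 - P\<^sub>2) R = (x\<^sub>1 - x\<^sub>2)(R\<^sup>2 + (Im A)\<^sup>2)\<close>, where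
  \<open>R = |z\<^sub>1 - conj z\<^sub>2|\<^sup>2/2 \<cdot> K > 0\<close> with \<open>K = \<integral> W(t) / |(z\<^sub>1 - t)(z\<^sub>2 - t)|\<^sup>2\<close>.
  The second identity gives strict monotonicity. The first gives
  \<open>|v\<^sub>1 - v\<^sub>2|\<^sup>3 K \<le> 2|x\<^sub>1 - x\<^sub>2|\<close>, and \<open>K\<close> is bounded below locally uniformly; hence \<open>v\<^sub>k\<close> and
  then \<open>P\<^sub>k\<close> are continuous. Finally \<open>|P\<^sub>k(x) - x|\<close> is bounded, so \<open>P\<^sub>k\<close> is onto.
\<close>

lemma integrable_inverse_1_plus_square_lborel:
  "integrable lborel (\<lambda>x::real. inverse (1 + x^2))"
  using integrable_inverse_1_plus_square by (simp add: set_integrable_def)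

lemma integral_pos_if_pos_off_0:
  fixes f :: "real \<Rightarrow> real"
  assumes f: "integrable lborel f" and nonneg: "\<And>t. 0 \<le> f t"
    and pos: "\<And>t. t \<noteq> 0 \<Longrightarrow> 0 < f t"
  shows "0 < integral\<^sup>L lborel f"
proof -
  have "integral\<^sup>L lborel f \<noteq> 0"
  proof
    assume "integral\<^sup>L lborel f = 0"
    then have "AE t in lborel. f t = 0"
      using integral_nonneg_eq_0_iff_AE[OF f] nonneg by auto
    with AE_lborel_singleton[of 0] have "AE t in lborel. t \<in> ({}::real set)"
      by eventually_elim (use pos in force)
    then have "emeasure lborel (UNIV::real set) = 0"
      by (subst (asm) AE_iff_measurable[of UNIV]) auto
    then show False by simp
  qed
  moreover have "0 \<le> integral\<^sup>L lborel f"
    by (rule integral_nonneg_AE) (simp add: nonneg)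
  ultimately show ?thesis by simp
qed

lemma abs_le_1_plus_square: "\<bar>x::real\<bar> \<le> 1 + x^2"
  using zero_le_power2[of "\<bar>x\<bar> - 1"] by (simp add: power2_eq_square algebra_simps)

lemma abs_mult_inverse_sum_squares_le:
  fixes p y :: real
  assumes "0 < y"
  shows "\<bar>p * inverse (p^2 + y^2)\<bar> \<le> inverse (p^2 + y^2) + 1"
proof -
  define D where "D = p^2 + y^2"
  have D: "0 < D" using assms by (simp add: D_def add_nonneg_pos)
  have "\<bar>p\<bar> \<le> 1 + D"
    unfolding D_def using abs_le_1_plus_square[of p] zero_le_power2[of y] by linarith
  then have "\<bar>p\<bar> * inverse D \<le> (1 + D) * inverse D"
    using D by (intro mult_right_mono) auto
  also have "\<dots> = inverse D + 1"
    using D by (simp add: distrib_right)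
  finally show ?thesis using D by (simp add: D_def[symmetric] abs_mult)
qed

lemma abs_inverse_sum_squares_le:
  fixes p y :: real
  shows "0 < y \<Longrightarrow> \<bar>inverse (p^2 + y^2)\<bar> \<le> inverse (y^2)"
  by (simp add: add_nonneg_pos le_imp_inverse_le)

lemma half_sum_inverse_sum_squares_le:
  fixes p q y1 y2 :: real
  assumes "0 < y1" "0 < y2"
  shows "(inverse (p^2 + y1^2) + inverse (q^2 + y2^2)) / 2 \<le> (inverse (y1^2) + inverse (y2^2)) / 2"
  using abs_le_D1[OF abs_inverse_sum_squares_le[OF assms(1), of p]]
    abs_le_D1[OF abs_inverse_sum_squares_le[OF assms(2), of q]] by simp

lemma has_integral_t_div_sum_squares_0_1:
  fixes y :: real
  assumes "0 < y"
  shows "((\<lambda>t. t / (t^2 + y^2)) has_integral (ln (1 + y^2) - ln (y^2)) / 2) {0..1}"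
proof -
  have D: "0 < t^2 + y^2" for t using assms by (simp add: add_nonneg_pos)
  have "((\<lambda>t. ln (t^2 + y^2) / 2) has_real_derivative t / (t^2 + y^2)) (at t within {0..1})" for t
  proof -
    have "((\<lambda>t. t^2 + y^2) has_real_derivative 2 * t) (at t within {0..1})"
      by (auto intro!: derivative_eq_intros)
    with DERIV_ln[OF D[of t]]
    have "((\<lambda>t. ln (t^2 + y^2)) has_real_derivative inverse (t^2 + y^2) * (2 * t)) (at t within {0..1})"
      by (rule DERIV_chain2)
    then have "((\<lambda>t. ln (t^2 + y^2) / 2) has_real_derivative inverse (t^2 + y^2) * (2 * t) / 2)
        (at t within {0..1})"
      by (rule DERIV_cdivide)
    moreover have "inverse E * (2 * t) / 2 = t / E" for E :: real
      by (simp add: field_simps)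
    ultimately show ?thesis by simp
  qed
  then show ?thesis
    using fundamental_theorem_of_calculus[of 0 1 "\<lambda>t. ln (t^2 + y^2) / 2" "\<lambda>t. t / (t^2 + y^2)"]
    by (simp add: has_real_derivative_iff_has_vector_derivative diff_divide_distrib)
qed

lemma set_integrable_t_div_sum_squares_0_1:
  fixes y :: real
  assumes "0 < y"
  shows "set_integrable lborel {0..1} (\<lambda>t. t / (t^2 + y^2))"
proof -
  have "t^2 + y^2 \<noteq> 0" for t using assms by (simp add: add_nonneg_eq_0_iff)
  then show ?thesis by (intro borel_integrable_atLeastAtMost' continuous_intros) auto
qed

lemma integral_t_div_sum_squares_0_1:
  fixes y :: real
  assumes "0 < y"
  shows "integral\<^sup>L lborel (\<lambda>t. indicator {0..1} t * (t / (t^2 + y^2))) = (ln (1 + y^2) - ln (y^2)) / 2"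
  using set_borel_integral_eq_integral(2)[OF set_integrable_t_div_sum_squares_0_1[OF assms]]
    integral_unique[OF has_integral_t_div_sum_squares_0_1[OF assms]]
  by (simp add: set_lebesgue_integral_def)

lemma Re_Complex_mult_divide:
  assumes "0 < (y::real)"
  shows "Re (Complex x y * (complex_of_real s / (Complex x y - complex_of_real t)))
    = s + t * s * ((x - t) * inverse ((x - t)^2 + y^2))"
proof -
  have D: "(x - t)^2 + y^2 \<noteq> 0" using assms by (simp add: add_nonneg_eq_0_iff)
  have "Complex x y - complex_of_real t = Complex (x - t) y" by (simp add: complex_eq_iff)
  then show ?thesis
    using D by (simp add: Re_divide Im_divide field_simps power2_eq_square)
qed

subsection \<open>Products of Cauchy kernels\<close>

text \<open>Real and imaginary part of \<open>1 / ((p + i y\<^sub>1)(q + i y\<^sub>2))\<close>.\<close>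

definition pair_re :: "real \<Rightarrow> real \<Rightarrow> real \<Rightarrow> real \<Rightarrow> real" where
  "pair_re p y1 q y2 = (p * q - y1 * y2) / ((p^2 + y1^2) * (q^2 + y2^2))"

definition pair_im :: "real \<Rightarrow> real \<Rightarrow> real \<Rightarrow> real \<Rightarrow> real" where
  "pair_im p y1 q y2 = - (p * y2 + q * y1) / ((p^2 + y1^2) * (q^2 + y2^2))"

lemma re_inverse_diff_eq_pair:
  assumes "0 < y1" "0 < y2"
  shows "p * inverse (p^2 + y1^2) - q * inverse (q^2 + y2^2)
    = (q - p) * pair_re p y1 q y2 + (y1 - y2) * pair_im p y1 q y2"
proof -
  define D1 D2 where "D1 = p^2 + y1^2" and "D2 = q^2 + y2^2"
  have D: "D1 \<noteq> 0" "D2 \<noteq> 0" using assms by (simp_all add: D1_def D2_def add_nonneg_eq_0_iff)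
  have "p * inverse D1 - q * inverse D2 = (p * D2 - q * D1) / (D1 * D2)"
    using D by (simp add: field_simps)
  also have "p * D2 - q * D1 = (q - p) * (p * q - y1 * y2) + (y1 - y2) * - (p * y2 + q * y1)"
    by (simp add: D1_def D2_def algebra_simps power2_eq_square)
  also have "\<dots> / (D1 * D2)
      = (q - p) * (p * q - y1 * y2) / (D1 * D2) + (y1 - y2) * - (p * y2 + q * y1) / (D1 * D2)"
    by (rule add_divide_distrib)
  finally show ?thesis
    unfolding pair_re_def pair_im_def D1_def[symmetric] D2_def[symmetric]
    by (simp only: times_divide_eq_right)
qed

lemma im_inverse_diff_eq_pair:
  assumes "0 < y1" "0 < y2"
  shows "y2 * inverse (q^2 + y2^2) - y1 * inverse (p^2 + y1^2)
    = (q - p) * pair_im p y1 q y2 - (y1 - y2) * pair_re p y1 q y2"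
proof -
  define D1 D2 where "D1 = p^2 + y1^2" and "D2 = q^2 + y2^2"
  have D: "D1 \<noteq> 0" "D2 \<noteq> 0" using assms by (simp_all add: D1_def D2_def add_nonneg_eq_0_iff)
  have "y2 * inverse D2 - y1 * inverse D1 = (y2 * D1 - y1 * D2) / (D1 * D2)"
    using D by (simp add: field_simps)
  also have "y2 * D1 - y1 * D2 = (q - p) * - (p * y2 + q * y1) - (y1 - y2) * (p * q - y1 * y2)"
    by (simp add: D1_def D2_def algebra_simps power2_eq_square)
  also have "\<dots> / (D1 * D2)
      = (q - p) * - (p * y2 + q * y1) / (D1 * D2) - (y1 - y2) * (p * q - y1 * y2) / (D1 * D2)"
    by (rule diff_divide_distrib)
  finally show ?thesis
    unfolding pair_re_def pair_im_def D1_def[symmetric] D2_def[symmetric]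
    by (simp only: times_divide_eq_right)
qed

lemma pair_re_eq:
  assumes "0 < y1" "0 < y2"
  shows "pair_re p y1 q y2 = (inverse (p^2 + y1^2) + inverse (q^2 + y2^2)) / 2
    - ((p - q)^2 + (y1 + y2)^2) / 2 * inverse ((p^2 + y1^2) * (q^2 + y2^2))"
proof -
  define D1 D2 where "D1 = p^2 + y1^2" and "D2 = q^2 + y2^2"
  have D: "D1 \<noteq> 0" "D2 \<noteq> 0" using assms by (simp_all add: D1_def D2_def add_nonneg_eq_0_iff)
  have "(inverse D1 + inverse D2) / 2 - ((p - q)^2 + (y1 + y2)^2) / 2 * inverse (D1 * D2)
      = ((D1 + D2) - ((p - q)^2 + (y1 + y2)^2)) / 2 / (D1 * D2)"
    using D by (simp add: field_simps)
  also have "(D1 + D2) - ((p - q)^2 + (y1 + y2)^2) = 2 * (p * q - y1 * y2)"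
    by (simp add: D1_def D2_def algebra_simps power2_eq_square)
  also have "2 * (p * q - y1 * y2) / 2 = p * q - y1 * y2"
    by simp
  finally show ?thesis
    unfolding pair_re_def D1_def[symmetric] D2_def[symmetric] by (rule sym)
qed

lemma abs_pair_le:
  assumes "0 < y1" "0 < y2"
  shows abs_pair_re_le: "\<bar>pair_re p y1 q y2\<bar> \<le> (inverse (p^2 + y1^2) + inverse (q^2 + y2^2)) / 2"
    and abs_pair_im_le: "\<bar>pair_im p y1 q y2\<bar> \<le> (inverse (p^2 + y1^2) + inverse (q^2 + y2^2)) / 2"
proof -
  define D1 D2 where "D1 = p^2 + y1^2" and "D2 = q^2 + y2^2"
  have D: "0 < D1" "0 < D2" using assms by (simp_all add: D1_def D2_def add_nonneg_pos)
  have half: "(inverse D1 + inverse D2) / 2 = (D1 + D2) / 2 / (D1 * D2)"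
    using D by (simp add: field_simps)
  have "\<bar>p * q - y1 * y2\<bar> \<le> (D1 + D2) / 2"
    using sum_squares_bound[of "\<bar>p\<bar>" "\<bar>q\<bar>"] sum_squares_bound[of "\<bar>y1\<bar>" "\<bar>y2\<bar>"]
      abs_triangle_ineq4[of "p * q" "y1 * y2"]
    by (simp add: D1_def D2_def abs_mult)
  then have "\<bar>p * q - y1 * y2\<bar> / (D1 * D2) \<le> (D1 + D2) / 2 / (D1 * D2)"
    using D by (intro divide_right_mono) auto
  then show "\<bar>pair_re p y1 q y2\<bar> \<le> (inverse (p^2 + y1^2) + inverse (q^2 + y2^2)) / 2"
    unfolding pair_re_def D1_def[symmetric] D2_def[symmetric] half using D
    by (simp add: abs_divide abs_mult)
  have "\<bar>p * y2 + q * y1\<bar> \<le> (D1 + D2) / 2"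
    using sum_squares_bound[of "\<bar>p\<bar>" "\<bar>y2\<bar>"] sum_squares_bound[of "\<bar>q\<bar>" "\<bar>y1\<bar>"]
      abs_triangle_ineq[of "p * y2" "q * y1"]
    by (simp add: D1_def D2_def abs_mult)
  then have "\<bar>- (p * y2 + q * y1)\<bar> / (D1 * D2) \<le> (D1 + D2) / 2 / (D1 * D2)"
    unfolding abs_minus_cancel using D by (intro divide_right_mono) auto
  then show "\<bar>pair_im p y1 q y2\<bar> \<le> (inverse (p^2 + y1^2) + inverse (q^2 + y2^2)) / 2"
    unfolding pair_im_def D1_def[symmetric] D2_def[symmetric] half using D
    by (simp add: abs_divide abs_mult)
qed

subsection \<open>The function \<open>v\<^sub>k\<close>\<close>

locale unimodal_kernel =
  fixes k :: "real \<Rightarrow> real"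
  assumes k_pos: "\<And>t. t \<noteq> 0 \<Longrightarrow> 0 < k t"
    and k_mono_neg: "mono_on {..<0} k"
    and k_antimono_pos: "antimono_on {0<..} k"
    and k_integrable: "integrable lborel k"
    and moment_integrable: "integrable lborel (\<lambda>t. \<bar>t\<bar> * k t)"
begin

definition W :: "real \<Rightarrow> real" where
  "W t = \<bar>t\<bar> * k t"

definition mass :: real where
  "mass = integral\<^sup>L lborel W"

lemma W_integrable: "integrable lborel W"
  using moment_integrable by (simp add: W_def[abs_def])

lemma W_measurable [measurable]: "W \<in> borel_measurable borel"
  using borel_measurable_integrable[OF W_integrable] by simp

lemma W_pos: "t \<noteq> 0 \<Longrightarrow> 0 < W t"
  by (simp add: W_def k_pos)

lemma W_nonneg: "0 \<le> W t"
  unfolding W_def using k_pos[of t] by (cases "t = 0") auto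

lemma W_eq_mult_ktilde: "W t = t * ktilde k t"
  by (simp add: W_def ktilde_def abs_sgn mult.assoc)

lemma mass_nonneg: "0 \<le> mass"
  unfolding mass_def by (rule integral_nonneg_AE) (simp add: W_nonneg)

lemma k_measurable [measurable]: "k \<in> borel_measurable borel"
  using borel_measurable_integrable[OF k_integrable] by simp

lemma ktilde_measurable [measurable]: "ktilde k \<in> borel_measurable borel"
  unfolding ktilde_def[abs_def] by measurable

lemma ktilde_integrable: "integrable lborel (ktilde k)"
proof (rule Bochner_Integration.integrable_bound[OF k_integrable])
  show "AE t in lborel. norm (ktilde k t) \<le> norm (k t)"
    by (simp add: ktilde_def abs_mult abs_sgn_eq mult_le_cancel_right1)
qed measurable

lemma integrable_W_mult:
  assumes [measurable]: "h \<in> borel_measurable borel" and bound: "\<And>t. \<bar>h t\<bar> \<le> C"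
  shows "integrable lborel (\<lambda>t. W t * h t)"
proof (rule Bochner_Integration.integrable_bound[OF integrable_mult_right[OF W_integrable, of C]])
  show "AE t in lborel. norm (W t * h t) \<le> norm (C * W t)"
  proof (rule AE_I2)
    fix t
    have "norm (W t * h t) = W t * \<bar>h t\<bar>" by (simp add: abs_mult W_nonneg)
    also have "\<dots> \<le> \<bar>C\<bar> * W t"
      using mult_left_mono[OF order.trans[OF bound abs_ge_self] W_nonneg] by (simp add: mult.commute)
    finally show "norm (W t * h t) \<le> norm (C * W t)" by (simp add: abs_mult W_nonneg)
  qed
qed measurable

lemma Fk_eq: "Fk k x y = integral\<^sup>L lborel (\<lambda>t. W t * inverse ((x - t)^2 + y^2))"
  unfolding Fk_def W_def by (simp add: divide_inverse)

lemma Fk_integrand_integrable: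
  "0 < y \<Longrightarrow> integrable lborel (\<lambda>t. W t * inverse ((x - t)^2 + y^2))"
  by (rule integrable_W_mult[OF _ abs_inverse_sum_squares_le]) auto

lemma Fk_le_mass_div: assumes "0 < y" shows "Fk k x y \<le> mass / y^2"
proof -
  have "Fk k x y \<le> integral\<^sup>L lborel (\<lambda>t. W t * inverse (y^2))"
    unfolding Fk_eq
    by (rule integral_mono[OF Fk_integrand_integrable[OF assms]])
       (auto intro!: integrable_mult_left W_integrable mult_left_mono W_nonneg
          order.trans[OF abs_ge_self abs_inverse_sum_squares_le[OF assms]])
  then show ?thesis by (simp add: mass_def divide_inverse)
qed

lemma Fk_strict_antimono:
  assumes "0 < y1" "y1 < y2"
  shows "Fk k x y2 < Fk k x y1"
proof -
  have y2: "0 < y2" using assms by simp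
  have lt: "inverse ((x - t)^2 + y2^2) < inverse ((x - t)^2 + y1^2)" for t
    using assms by (intro less_imp_inverse_less) (auto intro!: power_strict_mono add_nonneg_pos)
  have "0 < integral\<^sup>L lborel (\<lambda>t. W t * inverse ((x - t)^2 + y1^2) - W t * inverse ((x - t)^2 + y2^2))"
  proof (rule integral_pos_if_pos_off_0)
    show "integrable lborel (\<lambda>t. W t * inverse ((x - t)^2 + y1^2) - W t * inverse ((x - t)^2 + y2^2))"
      using Fk_integrand_integrable[OF assms(1)] Fk_integrand_integrable[OF y2] by auto
    show "0 \<le> W t * inverse ((x - t)^2 + y1^2) - W t * inverse ((x - t)^2 + y2^2)" for t
      using mult_left_mono[OF less_imp_le[OF lt] W_nonneg[of t]] by simp
    show "0 < W t * inverse ((x - t)^2 + y1^2) - W t * inverse ((x - t)^2 + y2^2)" if "t \<noteq> 0" for t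
      using mult_strict_left_mono[OF lt W_pos[OF that]] by simp
  qed
  then show ?thesis
    unfolding Fk_eq using Fk_integrand_integrable[OF assms(1)] Fk_integrand_integrable[OF y2] by simp
qed

lemma Fk_lipschitz:
  assumes a: "0 < a" and y1: "y1 \<in> {a..b}" and y2: "y2 \<in> {a..b}"
  shows "\<bar>Fk k x y1 - Fk k x y2\<bar> \<le> mass * (2 * b / a^4) * \<bar>y1 - y2\<bar>"
proof -
  have p1: "0 < y1" and p2: "0 < y2" using a y1 y2 by auto
  let ?L = "2 * b / a^4 * \<bar>y1 - y2\<bar>"
  have pointwise: "\<bar>W t * inverse ((x - t)^2 + y1^2) - W t * inverse ((x - t)^2 + y2^2)\<bar> \<le> W t * ?L"
    for t
  proof -
    define D1 D2 where "D1 = (x - t)^2 + y1^2" and "D2 = (x - t)^2 + y2^2"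
    have D: "0 < D1" "0 < D2" using p1 p2 by (simp_all add: D1_def D2_def add_nonneg_pos)
    have "a^2 * a^2 \<le> D1 * D2"
      using y1 y2 a by (intro mult_mono) (auto simp: D1_def D2_def intro!: power_mono add_increasing)
    then have aD: "a^4 \<le> D1 * D2" by (simp add: power4_eq_xxxx power2_eq_square mult.assoc)
    have "inverse D1 - inverse D2 = (D2 - D1) / (D1 * D2)"
      using D by (simp add: field_simps)
    also have "D2 - D1 = (y2 - y1) * (y1 + y2)"
      by (simp add: D1_def D2_def power2_eq_square algebra_simps)
    finally have "\<bar>inverse D1 - inverse D2\<bar> = \<bar>y1 - y2\<bar> * (y1 + y2) / (D1 * D2)"
      using D p1 p2 by (simp add: abs_divide abs_mult abs_minus_commute)
    also have "\<dots> \<le> \<bar>y1 - y2\<bar> * (2 * b) / a^4"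
      using y1 y2 a aD by (intro frac_le mult_left_mono) auto
    finally have "\<bar>inverse D1 - inverse D2\<bar> \<le> ?L" by (simp add: mult.commute)
    then have "W t * \<bar>inverse D1 - inverse D2\<bar> \<le> W t * ?L" by (rule mult_left_mono[OF _ W_nonneg])
    then show ?thesis unfolding D1_def D2_def by (simp add: right_diff_distrib[symmetric] abs_mult W_nonneg)
  qed
  have "\<bar>Fk k x y1 - Fk k x y2\<bar>
      = \<bar>integral\<^sup>L lborel (\<lambda>t. W t * inverse ((x - t)^2 + y1^2) - W t * inverse ((x - t)^2 + y2^2))\<bar>"
    unfolding Fk_eq using Fk_integrand_integrable[OF p1] Fk_integrand_integrable[OF p2] by simp
  also have "\<dots> \<le> integral\<^sup>L lborel (\<lambda>t. W t * ?L)"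
    by (rule integral_abs_bound_integral)
      (use Fk_integrand_integrable[OF p1] Fk_integrand_integrable[OF p2] W_integrable pointwise in auto)
  finally show ?thesis by (simp add: mass_def mult.assoc)
qed

lemma continuous_on_Fk:
  assumes "0 < a" "a \<le> b"
  shows "continuous_on {a..b} (Fk k x)"
proof (rule lipschitz_on_continuous_on)
  show "lipschitz_on (mass * (2 * b / a^4)) {a..b} (Fk k x)"
    unfolding lipschitz_on_def dist_real_def
    using assms mass_nonneg Fk_lipschitz[OF assms(1)] by auto
qed

lemma Fk_ge_interval:
  assumes y: "0 < y" and ab: "a \<le> b" and "0 \<le> c"
    and lower: "\<And>t. t \<in> {a..b} \<Longrightarrow> c \<le> W t * inverse ((x - t)^2 + y^2)"
  shows "c * (b - a) \<le> Fk k x y"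
proof -
  have "c * (b - a) = integral\<^sup>L lborel (\<lambda>t. indicator {a..b} t * c)"
    using ab by (simp add: measure_lborel_Icc mult.commute)
  also have "\<dots> \<le> Fk k x y" unfolding Fk_eq
  proof (rule integral_mono[OF _ Fk_integrand_integrable[OF y]])
    show "integrable lborel (\<lambda>t. indicator {a..b} t * c)"
      by (intro integrable_mult_left integrable_real_indicator) (use ab in auto)
    show "indicator {a..b} t * c \<le> W t * inverse ((x - t)^2 + y^2)" for t
      using lower[of t] \<open>0 \<le> c\<close> W_nonneg[of t] y
      by (cases "t \<in> {a..b}") (auto intro!: mult_nonneg_nonneg simp: add_nonneg_pos less_imp_le)
  qed
  finally show ?thesis .
qed

text \<open>
  Off the origin, \<open>W \<ge> |x| k(x)/2\<close> on an interval of length \<open>y\<close> between \<open>x/2\<close> and \<open>x\<close> on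
  which \<open>D \<le> 2y\<^sup>2\<close>, so \<open>F\<^sub>k(x,y) \<ge> |x| k(x)/(4y)\<close>.
\<close>

lemma Fk_gt_1_off_0:
  assumes "x \<noteq> 0"
  shows "\<exists>y>0. 1 < Fk k x y"
proof -
  define c where "c = \<bar>x\<bar> * k x / 2"
  have c: "0 < c" using k_pos[OF assms] assms by (simp add: c_def)
  define y where "y = min (\<bar>x\<bar> / 2) (c / 4)"
  have y: "0 < y" "y \<le> \<bar>x\<bar> / 2" "y \<le> c / 4" using c assms by (auto simp: y_def)
  define a where "a = (if x > 0 then x - y else x)"
  have W_ge: "c \<le> W t" if "t \<in> {a..a + y}" for t
  proof (cases "x > 0")
    case True
    then have t: "x / 2 \<le> t" "t \<le> x" using that y by (auto simp: a_def)
    then have "k x \<le> k t" using monotone_onD[OF k_antimono_pos, of t x] True by simp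
    then have "\<bar>x\<bar> / 2 * k x \<le> \<bar>t\<bar> * k t"
      using t True k_pos[OF assms] by (intro mult_mono) auto
    then show ?thesis unfolding c_def W_def by simp
  next
    case False
    then have t: "x \<le> t" "t \<le> x / 2" using that y assms by (auto simp: a_def)
    then have "k x \<le> k t" using monotone_onD[OF k_mono_neg, of x t] False assms by simp
    then have "\<bar>x\<bar> / 2 * k x \<le> \<bar>t\<bar> * k t"
      using t False assms k_pos[OF assms] by (intro mult_mono) auto
    then show ?thesis unfolding c_def W_def by simp
  qed
  have D_le: "(x - t)^2 + y^2 \<le> 2 * y^2" if "t \<in> {a..a + y}" for t
  proof -
    have "\<bar>x - t\<bar> \<le> y" using that by (auto simp: a_def split: if_splits)
    then have "\<bar>x - t\<bar>^2 \<le> y^2" by (rule power_mono) simp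
    then show ?thesis by simp
  qed
  have lower: "c / (2 * y^2) \<le> W t * inverse ((x - t)^2 + y^2)" if "t \<in> {a..a + y}" for t
  proof -
    have "0 < (x - t)^2 + y^2" using y(1) by (simp add: add_nonneg_pos)
    from frac_le[OF W_nonneg W_ge[OF that] this D_le[OF that]] show ?thesis
      by (simp only: divide_inverse)
  qed
  have "c / (2 * y^2) * (a + y - a) \<le> Fk k x y"
    by (rule Fk_ge_interval[OF y(1) _ _ lower]) (use c y in auto)
  moreover have "c / (2 * y^2) * (a + y - a) = c / (2 * y)" using y by (simp add: power2_eq_square)
  moreover have "2 \<le> c / (2 * y)" using y by (simp add: field_simps)
  ultimately show ?thesis using y by (intro exI[of _ y]) auto
qed

text \<open>
  At the origin, \<open>W(t) \<ge> k(1) t\<close> on \<open>[0,1]\<close>, and \<open>\<integral>\<^sub>0\<^sup>1 t/(t\<^sup>2 + y\<^sup>2) dt \<ge> -ln y\<close> diverges.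
\<close>

lemma Fk_gt_1_at_0: "\<exists>y>0. 1 < Fk k 0 y"
proof -
  define c where "c = k 1"
  have c: "0 < c" using k_pos[of 1] by (simp add: c_def)
  define y where "y = exp (- 2 / c)"
  have y: "0 < y" by (simp add: y_def)
  have "2 \<le> c * ((ln (1 + y^2) - ln (y^2)) / 2)"
    using c by (simp add: ln_realpow y_def field_simps)
  also have "\<dots> = integral\<^sup>L lborel (\<lambda>t. c * (indicator {0..1} t * (t / (t^2 + y^2))))"
    by (simp only: integral_mult_right_zero integral_t_div_sum_squares_0_1[OF y])
  also have "\<dots> \<le> Fk k 0 y" unfolding Fk_eq
  proof (rule integral_mono[OF _ Fk_integrand_integrable[OF y]])
    show "integrable lborel (\<lambda>t. c * (indicator {0..1} t * (t / (t^2 + y^2))))"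
      using set_integrable_t_div_sum_squares_0_1[OF y]
      by (intro integrable_mult_right) (simp add: set_integrable_def)
    show "c * (indicator {0..1} t * (t / (t^2 + y^2))) \<le> W t * inverse ((0 - t)^2 + y^2)" for t
    proof (cases "t \<in> {0<..1}")
      case True
      then have "c \<le> k t" using monotone_onD[OF k_antimono_pos, of t 1] by (simp add: c_def)
      then have "c * t \<le> W t" using True by (simp add: W_def mult.commute mult_right_mono)
      then have "c * t * inverse (t^2 + y^2) \<le> W t * inverse (t^2 + y^2)"
        by (rule mult_right_mono) simp
      then show ?thesis using True by (simp add: divide_inverse mult.assoc)
    next
      case False
      then show ?thesis using W_nonneg[of t] y by (cases "t = 0") (auto simp: add_nonneg_pos)
    qed
  qed
  finally show ?thesis using y by (intro exI[of _ y]) auto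
qed

lemma Fk_gt_1: "\<exists>y>0. 1 < Fk k x y"
  using Fk_gt_1_off_0 Fk_gt_1_at_0 by (cases "x = 0") auto

lemma vk_unique: "\<exists>!y. 0 < y \<and> Fk k x y = 1"
proof -
  obtain y0 where y0: "0 < y0" "1 < Fk k x y0" using Fk_gt_1 by blast
  define y1 where "y1 = y0 + mass + 1"
  have y1: "1 \<le> y1" "y0 \<le> y1" "mass < y1" using mass_nonneg y0 by (auto simp: y1_def)
  then have "mass < y1^2" by (simp add: power2_eq_square) (use mult_left_mono[of 1 y1 y1] in linarith)
  then have "mass / y1^2 < 1" using y1 by simp
  then have "Fk k x y1 \<le> 1"
    using Fk_le_mass_div[of y1 x] y1 by linarith
  then obtain y where y: "y0 \<le> y" "y \<le> y1" "Fk k x y = 1"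
    using IVT2'[of "Fk k x" y1 1 y0, OF _ _ y1(2) continuous_on_Fk[OF y0(1) y1(2)]] y0 by auto
  show ?thesis
  proof (rule ex1I[of _ y])
    show "0 < y \<and> Fk k x y = 1" using y y0 by simp
    show "y' = y" if "0 < y' \<and> Fk k x y' = 1" for y'
      using Fk_strict_antimono[of y' y x] Fk_strict_antimono[of y y' x] that y y0
      by (cases y' y rule: linorder_cases) auto
  qed
qed

lemma vk_pos: "0 < vk k x" and Fk_vk: "Fk k x (vk k x) = 1"
  using theI'[OF vk_unique[of x]] unfolding vk_def by auto

lemma vk_square_le_mass: "(vk k x)^2 \<le> mass"
proof -
  have "1 \<le> mass / (vk k x)^2"
    using Fk_le_mass_div[OF vk_pos[of x], of x] Fk_vk[of x] by simp
  then show ?thesis using vk_pos[of x] by (simp add: le_divide_eq)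
qed

subsection \<open>The real part of \<open>H\<^sub>k\<close>\<close>

definition G :: "real \<Rightarrow> real \<Rightarrow> real" where
  "G x y = integral\<^sup>L lborel (\<lambda>t. W t * ((x - t) * inverse ((x - t)^2 + y^2)))"

definition c0 :: real where
  "c0 = integral\<^sup>L lborel (ktilde k)"

lemma G_integrand_integrable:
  assumes "0 < y"
  shows "integrable lborel (\<lambda>t. W t * ((x - t) * inverse ((x - t)^2 + y^2)))"
proof (rule integrable_W_mult)
  show "\<bar>(x - t) * inverse ((x - t)^2 + y^2)\<bar> \<le> inverse (y^2) + 1" for t
    using abs_mult_inverse_sum_squares_le[OF assms, of "x - t"]
      abs_le_D1[OF abs_inverse_sum_squares_le[OF assms, of "x - t"]] by linarith
qed measurable

lemma abs_G_le:
  assumes y: "0 < y"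
  shows "\<bar>G x y\<bar> \<le> Fk k x y + mass"
proof -
  have "\<bar>G x y\<bar> \<le> integral\<^sup>L lborel (\<lambda>t. W t * inverse ((x - t)^2 + y^2) + W t)"
    unfolding G_def
  proof (rule integral_abs_bound_integral[OF G_integrand_integrable[OF y]])
    show "integrable lborel (\<lambda>t. W t * inverse ((x - t)^2 + y^2) + W t)"
      using Fk_integrand_integrable[OF y] W_integrable by auto
    show "\<bar>W t * ((x - t) * inverse ((x - t)^2 + y^2))\<bar> \<le> W t * inverse ((x - t)^2 + y^2) + W t"
      for t
      using mult_left_mono[OF abs_mult_inverse_sum_squares_le[OF y, of "x - t"] W_nonneg[of t]]
      by (simp add: abs_mult W_nonneg distrib_left)
  qed
  also have "\<dots> = Fk k x y + mass"
    unfolding Fk_eq mass_def using Fk_integrand_integrable[OF y] W_integrable by simp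
  finally show ?thesis .
qed

lemma Re_Hk:
  assumes y: "0 < y"
  shows "Re (Hk k (Complex x y)) = x + c0 + G x y"
proof -
  define z where "z = Complex x y"
  define f where "f t = complex_of_real (ktilde k t) / (z - complex_of_real t)" for t
  have f_measurable [measurable]: "f \<in> borel_measurable lborel"
    unfolding f_def[abs_def] by measurable
  have "integrable lborel f"
  proof (rule Bochner_Integration.integrable_bound[OF
        integrable_divide[OF ktilde_integrable, of y] f_measurable])
    show "AE t in lborel. norm (f t) \<le> norm (ktilde k t / y)"
    proof (rule AE_I2)
      fix t
      have "y \<le> cmod (z - complex_of_real t)"
        using abs_Im_le_cmod[of "z - complex_of_real t"] y by (simp add: z_def)
      moreover have "0 < cmod (z - complex_of_real t)" using calculation y by linarith
      ultimately have "\<bar>ktilde k t\<bar> / cmod (z - complex_of_real t) \<le> \<bar>ktilde k t\<bar> / y"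
        using y by (intro divide_left_mono) auto
      then show "norm (f t) \<le> norm (ktilde k t / y)"
        using y by (simp add: f_def norm_divide)
    qed
  qed
  then have zf: "integrable lborel (\<lambda>t. z * f t)" by (rule integrable_mult_right)
  have "Re (Hk k z) = x + Re (z * integral\<^sup>L lborel f)"
    unfolding Hk_def f_def by (simp add: z_def)
  also have "z * integral\<^sup>L lborel f = integral\<^sup>L lborel (\<lambda>t. z * f t)"
    by simp
  also have "Re (integral\<^sup>L lborel (\<lambda>t. z * f t)) = integral\<^sup>L lborel (\<lambda>t. Re (z * f t))"
    using integral_Re[OF zf] by simp
  also have "\<dots> = integral\<^sup>L lborel (\<lambda>t. ktilde k t + W t * ((x - t) * inverse ((x - t)^2 + y^2)))"
    unfolding f_def z_def Re_Complex_mult_divide[OF y] W_eq_mult_ktilde by simp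
  also have "\<dots> = c0 + G x y"
    unfolding c0_def G_def using ktilde_integrable G_integrand_integrable[OF y] by simp
  finally show ?thesis by (simp add: z_def)
qed

lemma Pk_eq: "Pk k x = x + c0 + G x (vk k x)"
  unfolding Pk_def by (rule Re_Hk[OF vk_pos])

lemma abs_Pk_minus_le: "\<bar>Pk k x - x\<bar> \<le> \<bar>c0\<bar> + 1 + mass"
  using abs_G_le[OF vk_pos, of x x] Fk_vk[of x] unfolding Pk_eq by linarith

subsection \<open>Monotonicity\<close>

text \<open>
  For \<open>z\<^sub>j = x\<^sub>j + i y\<^sub>j\<close>: \<open>AR + i AI = \<integral> W(t) / ((z\<^sub>1 - t)(z\<^sub>2 - t))\<close> and
  \<open>K = \<integral> W(t) / |(z\<^sub>1 - t)(z\<^sub>2 - t)|\<^sup>2\<close>.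
\<close>

definition AR :: "real \<Rightarrow> real \<Rightarrow> real \<Rightarrow> real \<Rightarrow> real" where
  "AR x1 y1 x2 y2 = integral\<^sup>L lborel (\<lambda>t. W t * pair_re (x1 - t) y1 (x2 - t) y2)"

definition AI :: "real \<Rightarrow> real \<Rightarrow> real \<Rightarrow> real \<Rightarrow> real" where
  "AI x1 y1 x2 y2 = integral\<^sup>L lborel (\<lambda>t. W t * pair_im (x1 - t) y1 (x2 - t) y2)"

definition K :: "real \<Rightarrow> real \<Rightarrow> real \<Rightarrow> real \<Rightarrow> real" where
  "K x1 y1 x2 y2 = integral\<^sup>L lborel (\<lambda>t. W t * inverse (((x1 - t)^2 + y1^2) * ((x2 - t)^2 + y2^2)))"

lemma AR_integrand_integrable:
  assumes "0 < y1" "0 < y2"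
  shows "integrable lborel (\<lambda>t. W t * pair_re (x1 - t) y1 (x2 - t) y2)"
  by (rule integrable_W_mult[OF _
        order.trans[OF abs_pair_re_le[OF assms] half_sum_inverse_sum_squares_le[OF assms]]])
    (unfold pair_re_def, measurable)

lemma AI_integrand_integrable:
  assumes "0 < y1" "0 < y2"
  shows "integrable lborel (\<lambda>t. W t * pair_im (x1 - t) y1 (x2 - t) y2)"
  by (rule integrable_W_mult[OF _
        order.trans[OF abs_pair_im_le[OF assms] half_sum_inverse_sum_squares_le[OF assms]]])
    (unfold pair_im_def, measurable)

lemma K_integrand_integrable:
  assumes "0 < y1" "0 < y2"
  shows "integrable lborel (\<lambda>t. W t * inverse (((x1 - t)^2 + y1^2) * ((x2 - t)^2 + y2^2)))"
proof (rule integrable_W_mult)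
  show "\<bar>inverse (((x1 - t)^2 + y1^2) * ((x2 - t)^2 + y2^2))\<bar> \<le> inverse (y1^2) * inverse (y2^2)" for t
    unfolding abs_mult inverse_mult_distrib
    by (rule mult_mono[OF abs_inverse_sum_squares_le[OF assms(1)] abs_inverse_sum_squares_le[OF assms(2)]]) auto
qed measurable

lemma K_pos:
  assumes "0 < y1" "0 < y2"
  shows "0 < K x1 y1 x2 y2"
  unfolding K_def
proof (rule integral_pos_if_pos_off_0[OF K_integrand_integrable[OF assms]])
  have "0 < inverse (((x1 - t)^2 + y1^2) * ((x2 - t)^2 + y2^2))" for t
    using assms by (simp add: add_nonneg_pos)
  then show "0 \<le> W t * inverse (((x1 - t)^2 + y1^2) * ((x2 - t)^2 + y2^2))"
    and "t \<noteq> 0 \<Longrightarrow> 0 < W t * inverse (((x1 - t)^2 + y1^2) * ((x2 - t)^2 + y2^2))" for t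
    using W_nonneg W_pos by (simp_all add: less_imp_le)
qed

lemma G_diff_eq:
  assumes y1: "0 < y1" and y2: "0 < y2"
  shows "G x1 y1 - G x2 y2 = (x2 - x1) * AR x1 y1 x2 y2 + (y1 - y2) * AI x1 y1 x2 y2"
proof -
  have "G x1 y1 - G x2 y2 = integral\<^sup>L lborel (\<lambda>t. W t * ((x1 - t) * inverse ((x1 - t)^2 + y1^2))
      - W t * ((x2 - t) * inverse ((x2 - t)^2 + y2^2)))"
    unfolding G_def using G_integrand_integrable[OF y1] G_integrand_integrable[OF y2] by simp
  also have "\<dots> = integral\<^sup>L lborel (\<lambda>t. (x2 - x1) * (W t * pair_re (x1 - t) y1 (x2 - t) y2)
      + (y1 - y2) * (W t * pair_im (x1 - t) y1 (x2 - t) y2))"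
  proof (intro Bochner_Integration.integral_cong refl)
    fix t
    from arg_cong[OF re_inverse_diff_eq_pair[OF y1 y2, of "x1 - t" "x2 - t"], of "(*) (W t)"]
    show "W t * ((x1 - t) * inverse ((x1 - t)^2 + y1^2)) - W t * ((x2 - t) * inverse ((x2 - t)^2 + y2^2))
      = (x2 - x1) * (W t * pair_re (x1 - t) y1 (x2 - t) y2) + (y1 - y2) * (W t * pair_im (x1 - t) y1 (x2 - t) y2)"
      by (simp add: algebra_simps)
  qed
  also have "\<dots> = (x2 - x1) * AR x1 y1 x2 y2 + (y1 - y2) * AI x1 y1 x2 y2"
    unfolding AR_def AI_def
    using AR_integrand_integrable[OF y1 y2] AI_integrand_integrable[OF y1 y2] by simp
  finally show ?thesis .
qed

lemma Fk_diff_eq: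
  assumes y1: "0 < y1" and y2: "0 < y2"
  shows "y2 * Fk k x2 y2 - y1 * Fk k x1 y1 = (x2 - x1) * AI x1 y1 x2 y2 - (y1 - y2) * AR x1 y1 x2 y2"
proof -
  have "y2 * Fk k x2 y2 - y1 * Fk k x1 y1 = integral\<^sup>L lborel (\<lambda>t. y2 * (W t * inverse ((x2 - t)^2 + y2^2))
      - y1 * (W t * inverse ((x1 - t)^2 + y1^2)))"
    unfolding Fk_eq using Fk_integrand_integrable[OF y1] Fk_integrand_integrable[OF y2] by simp
  also have "\<dots> = integral\<^sup>L lborel (\<lambda>t. (x2 - x1) * (W t * pair_im (x1 - t) y1 (x2 - t) y2)
      - (y1 - y2) * (W t * pair_re (x1 - t) y1 (x2 - t) y2))"
  proof (intro Bochner_Integration.integral_cong refl)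
    fix t
    from arg_cong[OF im_inverse_diff_eq_pair[OF y1 y2, of "x2 - t" "x1 - t"], of "(*) (W t)"]
    show "y2 * (W t * inverse ((x2 - t)^2 + y2^2)) - y1 * (W t * inverse ((x1 - t)^2 + y1^2))
      = (x2 - x1) * (W t * pair_im (x1 - t) y1 (x2 - t) y2) - (y1 - y2) * (W t * pair_re (x1 - t) y1 (x2 - t) y2)"
      by (simp add: algebra_simps)
  qed
  also have "\<dots> = (x2 - x1) * AI x1 y1 x2 y2 - (y1 - y2) * AR x1 y1 x2 y2"
    unfolding AR_def AI_def
    using AR_integrand_integrable[OF y1 y2] AI_integrand_integrable[OF y1 y2] by simp
  finally show ?thesis .
qed

lemma AR_eq:
  assumes y1: "0 < y1" and y2: "0 < y2"
  shows "AR x1 y1 x2 y2 = (Fk k x1 y1 + Fk k x2 y2) / 2 - ((x1 - x2)^2 + (y1 + y2)^2) / 2 * K x1 y1 x2 y2"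
proof -
  have "AR x1 y1 x2 y2 = integral\<^sup>L lborel (\<lambda>t. (W t * inverse ((x1 - t)^2 + y1^2)
      + W t * inverse ((x2 - t)^2 + y2^2)) / 2
      - ((x1 - x2)^2 + (y1 + y2)^2) / 2 * (W t * inverse (((x1 - t)^2 + y1^2) * ((x2 - t)^2 + y2^2))))"
    unfolding AR_def pair_re_eq[OF y1 y2]
    by (intro Bochner_Integration.integral_cong) (simp_all add: algebra_simps)
  also have "\<dots> = (Fk k x1 y1 + Fk k x2 y2) / 2 - ((x1 - x2)^2 + (y1 + y2)^2) / 2 * K x1 y1 x2 y2"
    unfolding Fk_eq K_def
    using Fk_integrand_integrable[OF y1] Fk_integrand_integrable[OF y2] K_integrand_integrable[OF y1 y2]
    by simp
  finally show ?thesis .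
qed

lemma abs_AR_AI_le:
  assumes y1: "0 < y1" and y2: "0 < y2"
  shows abs_AR_le: "\<bar>AR x1 y1 x2 y2\<bar> \<le> (Fk k x1 y1 + Fk k x2 y2) / 2"
    and abs_AI_le: "\<bar>AI x1 y1 x2 y2\<bar> \<le> (Fk k x1 y1 + Fk k x2 y2) / 2"
proof -
  let ?h = "\<lambda>t. (W t * inverse ((x1 - t)^2 + y1^2) + W t * inverse ((x2 - t)^2 + y2^2)) / 2"
  have h: "integrable lborel ?h" "integral\<^sup>L lborel ?h = (Fk k x1 y1 + Fk k x2 y2) / 2"
    unfolding Fk_eq using Fk_integrand_integrable[OF y1] Fk_integrand_integrable[OF y2] by simp_all
  have weighted: "\<bar>W t * a\<bar> \<le> ?h t"
    if "\<bar>a\<bar> \<le> (inverse ((x1 - t)^2 + y1^2) + inverse ((x2 - t)^2 + y2^2)) / 2" for a t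
    using mult_left_mono[OF that W_nonneg[of t]] by (simp add: abs_mult W_nonneg algebra_simps)
  show "\<bar>AR x1 y1 x2 y2\<bar> \<le> (Fk k x1 y1 + Fk k x2 y2) / 2"
    unfolding AR_def h(2)[symmetric]
    by (rule integral_abs_bound_integral[OF AR_integrand_integrable[OF y1 y2] h(1)
          weighted[OF abs_pair_re_le[OF y1 y2]]])
  show "\<bar>AI x1 y1 x2 y2\<bar> \<le> (Fk k x1 y1 + Fk k x2 y2) / 2"
    unfolding AI_def h(2)[symmetric]
    by (rule integral_abs_bound_integral[OF AI_integrand_integrable[OF y1 y2] h(1)
          weighted[OF abs_pair_im_le[OF y1 y2]]])
qed

abbreviation R :: "real \<Rightarrow> real \<Rightarrow> real" where
  "R x1 x2 \<equiv> 1 - AR x1 (vk k x1) x2 (vk k x2)"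

abbreviation I :: "real \<Rightarrow> real \<Rightarrow> real" where
  "I x1 x2 \<equiv> AI x1 (vk k x1) x2 (vk k x2)"

abbreviation Kv :: "real \<Rightarrow> real \<Rightarrow> real" where
  "Kv x1 x2 \<equiv> K x1 (vk k x1) x2 (vk k x2)"

lemma R_eq: "R x1 x2 = ((x1 - x2)^2 + (vk k x1 + vk k x2)^2) / 2 * Kv x1 x2"
  using AR_eq[OF vk_pos[of x1] vk_pos[of x2], of x1 x2] by (simp add: Fk_vk)

lemma R_pos: "0 < R x1 x2"
  unfolding R_eq using vk_pos[of x1] vk_pos[of x2] K_pos[OF vk_pos[of x1] vk_pos[of x2], of x1 x2]
  by (simp add: add_nonneg_pos)

lemma R_le_2: "R x1 x2 \<le> 2"
  using abs_AR_le[OF vk_pos[of x1] vk_pos[of x2], of x1 x2] by (simp add: Fk_vk)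

lemma abs_I_le_1: "\<bar>I x1 x2\<bar> \<le> 1"
  using abs_AI_le[OF vk_pos[of x1] vk_pos[of x2], of x1 x2] by (simp add: Fk_vk)

lemma vk_diff_eq: "(vk k x1 - vk k x2) * R x1 x2 = (x1 - x2) * I x1 x2"
  using Fk_diff_eq[OF vk_pos[of x1] vk_pos[of x2], of x2 x1] by (simp add: Fk_vk algebra_simps)

lemma Pk_diff_eq: "Pk k x1 - Pk k x2 = (x1 - x2) * R x1 x2 + (vk k x1 - vk k x2) * I x1 x2"
  using G_diff_eq[OF vk_pos[of x1] vk_pos[of x2], of x1 x2] by (simp add: Pk_eq algebra_simps)

lemma Pk_diff_mult_R: "(Pk k x1 - Pk k x2) * R x1 x2 = (x1 - x2) * ((R x1 x2)^2 + (I x1 x2)^2)"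
  unfolding Pk_diff_eq distrib_right mult.assoc[of "vk k x1 - vk k x2"] mult.commute[of "I x1 x2"]
  by (simp only: mult.assoc[symmetric] vk_diff_eq) (simp add: algebra_simps power2_eq_square)

lemma strict_mono_Pk: "strict_mono (Pk k)"
proof (rule strict_monoI)
  fix x2 x1 :: real
  assume "x2 < x1"
  then have "0 < (Pk k x1 - Pk k x2) * R x1 x2"
    unfolding Pk_diff_mult_R using R_pos[of x1 x2] by (intro mult_pos_pos) (simp_all add: add_pos_nonneg)
  then show "Pk k x2 < Pk k x1"
    using R_pos[of x1 x2] by (simp add: zero_less_mult_iff)
qed

lemma abs_Pk_diff_le: "\<bar>Pk k x1 - Pk k x2\<bar> \<le> 2 * \<bar>x1 - x2\<bar> + \<bar>vk k x1 - vk k x2\<bar>"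
proof -
  have "\<bar>Pk k x1 - Pk k x2\<bar> \<le> \<bar>(x1 - x2) * R x1 x2\<bar> + \<bar>(vk k x1 - vk k x2) * I x1 x2\<bar>"
    unfolding Pk_diff_eq by (rule abs_triangle_ineq)
  also have "\<bar>(x1 - x2) * R x1 x2\<bar> \<le> \<bar>x1 - x2\<bar> * 2"
    unfolding abs_mult using R_pos[of x1 x2] R_le_2[of x1 x2] by (intro mult_left_mono) auto
  also have "\<bar>(vk k x1 - vk k x2) * I x1 x2\<bar> \<le> \<bar>vk k x1 - vk k x2\<bar> * 1"
    unfolding abs_mult using abs_I_le_1[of x1 x2] by (intro mult_left_mono) auto
  finally show ?thesis by simp
qed

lemma abs_vk_diff_cube_le: "\<bar>vk k x1 - vk k x2\<bar> ^ 3 * Kv x1 x2 \<le> 2 * \<bar>x1 - x2\<bar>"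
proof -
  define d where "d = \<bar>vk k x1 - vk k x2\<bar>"
  have "0 \<le> d" by (simp add: d_def)
  have "d^2 \<le> (vk k x1 + vk k x2)^2"
    using vk_pos[of x1] vk_pos[of x2] by (intro power_mono) (auto simp: d_def)
  then have "d^2 / 2 * Kv x1 x2 \<le> R x1 x2"
    unfolding R_eq using K_pos[OF vk_pos[of x1] vk_pos[of x2], of x1 x2]
    by (intro mult_right_mono divide_right_mono) (auto intro: add_increasing)
  have "d^3 * Kv x1 x2 = 2 * (d * (d^2 / 2 * Kv x1 x2))"
    by (simp add: power3_eq_cube power2_eq_square)
  also have "\<dots> \<le> 2 * (d * R x1 x2)"
    using mult_left_mono[OF \<open>d^2 / 2 * Kv x1 x2 \<le> R x1 x2\<close> \<open>0 \<le> d\<close>] by simp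
  also have "\<dots> \<le> 2 * \<bar>x1 - x2\<bar>"
    using arg_cong[OF vk_diff_eq[of x1 x2], of abs] R_pos[of x1 x2] abs_I_le_1[of x1 x2]
    by (simp add: d_def abs_mult mult_left_le)
  finally show ?thesis unfolding d_def .
qed

subsection \<open>Continuity and surjectivity\<close>

definition D_majorant :: "real \<Rightarrow> real \<Rightarrow> real" where
  "D_majorant x0 t = 2 * (x0 - t)^2 + 2 + mass"

definition K_minorant :: "real \<Rightarrow> real" where
  "K_minorant x0 = integral\<^sup>L lborel (\<lambda>t. W t * inverse (D_majorant x0 t * D_majorant x0 t))"

lemma D_majorant_ge_1: "1 \<le> D_majorant x0 t"
  unfolding D_majorant_def using mass_nonneg by simp

lemma K_minorant_integrand_integrable:
  "integrable lborel (\<lambda>t. W t * inverse (D_majorant x0 t * D_majorant x0 t))"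
proof (rule integrable_W_mult)
  show "\<bar>inverse (D_majorant x0 t * D_majorant x0 t)\<bar> \<le> 1" for t
    using D_majorant_ge_1[of x0 t] by (simp add: inverse_le_1_iff mult_le_one)
qed (unfold D_majorant_def, measurable)

lemma K_minorant_pos: "0 < K_minorant x0"
  unfolding K_minorant_def
proof (rule integral_pos_if_pos_off_0[OF K_minorant_integrand_integrable])
  have "0 < inverse (D_majorant x0 t * D_majorant x0 t)" for t
    using D_majorant_ge_1[of x0 t] by simp
  then show "0 \<le> W t * inverse (D_majorant x0 t * D_majorant x0 t)"
    and "t \<noteq> 0 \<Longrightarrow> 0 < W t * inverse (D_majorant x0 t * D_majorant x0 t)" for t
    using W_nonneg W_pos by (simp_all add: less_imp_le)
qed

lemma sum_squares_le_D_majorant: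
  assumes "\<bar>x - x0\<bar> \<le> 1" "y^2 \<le> mass"
  shows "(x - t)^2 + y^2 \<le> D_majorant x0 t"
proof -
  have "(x - t)^2 \<le> 2 * (x - x0)^2 + 2 * (x0 - t)^2"
    using zero_le_power2[of "(x - x0) - (x0 - t)"] by (simp add: power2_eq_square algebra_simps)
  moreover have "(x - x0)^2 \<le> 1"
    using power_mono[OF assms(1), of 2] by simp
  ultimately show ?thesis unfolding D_majorant_def using assms(2) by simp
qed

lemma K_minorant_le_Kv:
  assumes "\<bar>x1 - x0\<bar> \<le> 1" "\<bar>x2 - x0\<bar> \<le> 1"
  shows "K_minorant x0 \<le> Kv x1 x2"
  unfolding K_minorant_def K_def
proof (rule integral_mono[OF K_minorant_integrand_integrable K_integrand_integrable[OF vk_pos vk_pos]])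
  fix t
  let ?D1 = "(x1 - t)^2 + (vk k x1)^2" and ?D2 = "(x2 - t)^2 + (vk k x2)^2"
  have "0 < ?D1" "0 < ?D2"
    using vk_pos[of x1] vk_pos[of x2] by (auto intro: add_nonneg_pos)
  moreover have "?D1 * ?D2 \<le> D_majorant x0 t * D_majorant x0 t"
    using calculation sum_squares_le_D_majorant[OF assms(1) vk_square_le_mass]
      sum_squares_le_D_majorant[OF assms(2) vk_square_le_mass] D_majorant_ge_1[of x0 t]
    by (intro mult_mono) auto
  ultimately have "inverse (D_majorant x0 t * D_majorant x0 t) \<le> inverse (?D1 * ?D2)"
    by (intro le_imp_inverse_le) auto
  then show "W t * inverse (D_majorant x0 t * D_majorant x0 t) \<le> W t * inverse (?D1 * ?D2)"
    by (rule mult_left_mono[OF _ W_nonneg])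
qed

lemma continuous_on_vk: "continuous_on UNIV (vk k)"
  unfolding continuous_on_iff
proof (intro ballI allI impI)
  fix x0 e :: real
  assume e: "0 < e"
  define c where "c = K_minorant x0"
  have c: "0 < c" unfolding c_def by (rule K_minorant_pos)
  define d where "d = min 1 (c * e^3 / 2)"
  have "0 < d" using e c by (simp add: d_def)
  moreover have "dist (vk k x) (vk k x0) < e" if "dist x x0 < d" for x
  proof -
    have dx: "\<bar>x - x0\<bar> \<le> 1" "2 * \<bar>x - x0\<bar> < c * e^3"
      using that by (simp_all add: d_def dist_real_def)
    have "\<bar>vk k x - vk k x0\<bar>^3 * c \<le> \<bar>vk k x - vk k x0\<bar>^3 * Kv x x0"
      unfolding c_def by (rule mult_left_mono[OF K_minorant_le_Kv[OF dx(1)]]) simp_all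
    also have "\<dots> \<le> 2 * \<bar>x - x0\<bar>" by (rule abs_vk_diff_cube_le)
    also have "\<dots> < e^3 * c" using dx(2) by (simp add: mult.commute)
    finally have "\<bar>vk k x - vk k x0\<bar>^3 < e^3" using c by simp
    then show ?thesis
      using e by (simp add: dist_real_def power_less_imp_less_base)
  qed
  ultimately show "\<exists>d>0. \<forall>x\<in>UNIV. dist x x0 < d \<longrightarrow> dist (vk k x) (vk k x0) < e" by auto
qed

lemma continuous_on_Pk: "continuous_on UNIV (Pk k)"
proof (rule continuous_at_imp_continuous_on, intro ballI)
  fix x0 :: real
  have "((\<lambda>x. vk k x - vk k x0) \<longlongrightarrow> 0) (at x0)"
    using continuous_on_vk by (intro LIM_zero) (simp add: continuous_on_def)
  moreover have "((\<lambda>x. x - x0) \<longlongrightarrow> 0) (at x0)"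
    by (intro LIM_zero tendsto_ident_at)
  ultimately have bound: "((\<lambda>x. 2 * \<bar>x - x0\<bar> + \<bar>vk k x - vk k x0\<bar>) \<longlongrightarrow> 0) (at x0)"
    by (intro tendsto_add_zero tendsto_mult_right_zero tendsto_rabs_zero)
  have "((\<lambda>x. \<bar>Pk k x - Pk k x0\<bar>) \<longlongrightarrow> 0) (at x0)"
    by (rule tendsto_sandwich[OF _ _ tendsto_const bound]) (auto intro!: always_eventually abs_Pk_diff_le)
  then show "isCont (Pk k) x0"
    unfolding isCont_def by (rule LIM_zero_cancel[OF tendsto_rabs_zero_cancel])
qed

lemma surj_Pk: "surj (Pk k)"
proof -
  define C where "C = \<bar>c0\<bar> + 1 + mass"
  have "0 \<le> C" using mass_nonneg by (simp add: C_def)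
  have near: "\<bar>Pk k x - x\<bar> \<le> C" for x
    unfolding C_def by (rule abs_Pk_minus_le)
  have "\<exists>x. Pk k x = b" for b
  proof -
    have "Pk k (b - C - 1) \<le> b" "b \<le> Pk k (b + C + 1)" "b - C - 1 \<le> b + C + 1"
      using near[of "b - C - 1"] near[of "b + C + 1"] \<open>0 \<le> C\<close> by linarith+
    then show ?thesis
      using IVT'[OF _ _ _ continuous_on_subset[OF continuous_on_Pk]] by blast

  qed
  then show ?thesis by (metis surjI)
qed

end

lemma one_plus_abs_mult_le_of_decay:
  fixes t a B :: real
  assumes "\<bar>(1 + t^2)^2 * a\<bar> \<le> B"
  shows "(1 + \<bar>t\<bar>) * \<bar>a\<bar> \<le> 2 * B * inverse (1 + t^2)"
proof -
  have D: "0 < 1 + t^2" by (simp add: add_pos_nonneg)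
  have "1 + \<bar>t\<bar> \<le> 2 * (1 + t^2)"
    using order.trans[OF abs_le_1_plus_square[of t], of "1 + 2 * t^2"] by simp
  then have "(1 + \<bar>t\<bar>) * \<bar>a\<bar> \<le> 2 * (1 + t^2) * \<bar>a\<bar>"
    by (rule mult_right_mono) simp
  also have "\<dots> = 2 * ((1 + t^2)^2 * \<bar>a\<bar>) * inverse (1 + t^2)"
    using D by (simp add: power2_eq_square field_simps)
  also have "\<dots> \<le> 2 * B * inverse (1 + t^2)"
    using assms D by (simp add: abs_mult)
  finally show ?thesis .
qed

lemma integrable_of_inverse_square_decay:
  fixes k :: "real \<Rightarrow> real"
  assumes cont: "continuous_on (- {0}) k" and decay: "\<And>t. t \<noteq> 0 \<Longrightarrow> \<bar>(1 + t^2)^2 * k t\<bar> \<le> B"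
  shows "integrable lborel k" and "integrable lborel (\<lambda>t. \<bar>t\<bar> * k t)"
proof -
  have B: "0 \<le> B" using decay[of 1] by (metis abs_ge_zero order.trans zero_neq_one)
  define k0 where "k0 t = indicator (- {0}) t * k t" for t
  have [measurable]: "k0 \<in> borel_measurable borel"
    unfolding k0_def using borel_measurable_continuous_on_indicator[OF _ cont] by simp
  have "(\<lambda>t. k0 t + indicator {0} t * k 0) \<in> borel_measurable borel"
    by measurable
  moreover have "k = (\<lambda>t. k0 t + indicator {0} t * k 0)"
    by (auto simp: k0_def indicator_def)
  ultimately have [measurable]: "k \<in> borel_measurable borel"
    by metis
  have bound: "(1 + \<bar>t\<bar>) * \<bar>k0 t\<bar> \<le> 2 * B * inverse (1 + t^2)" for t
    using one_plus_abs_mult_le_of_decay[OF decay[of t]] B by (cases "t = 0") (simp_all add: k0_def)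
  have int: "integrable lborel (\<lambda>t. (1 + \<bar>t\<bar>) * k0 t)"
    by (rule Bochner_Integration.integrable_bound[OF
          integrable_mult_right[OF integrable_inverse_1_plus_square_lborel, of "2 * B"]])
      (use bound in \<open>auto simp: abs_mult abs_of_nonneg[OF B]\<close>)
  have ae: "AE t in lborel. k0 t = k t"
    using AE_lborel_singleton[of 0] by eventually_elim (simp add: k0_def)
  have weight: "c * \<bar>k0 t\<bar> \<le> (1 + \<bar>t\<bar>) * \<bar>k0 t\<bar>" if "c \<le> 1 + \<bar>t\<bar>" for c t
    using that by (rule mult_right_mono) simp
  have "integrable lborel k0"
    by (rule Bochner_Integration.integrable_bound[OF int])
      (use weight[of 1] in \<open>auto intro!: AE_I2 simp: abs_mult\<close>)
  then show "integrable lborel k"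
    using integrable_cong_AE[of k0 lborel k] ae by simp
  have "integrable lborel (\<lambda>t. \<bar>t\<bar> * k0 t)"
    by (rule Bochner_Integration.integrable_bound[OF int])
      (use weight in \<open>auto intro!: AE_I2 simp: abs_mult\<close>)
  moreover have "\<bar>t\<bar> * k0 t = \<bar>t\<bar> * k t" for t
    by (cases "t = 0") (simp_all add: k0_def)
  ultimately show "integrable lborel (\<lambda>t. \<bar>t\<bar> * k t)" by simp
qed

theorem lemma3p4:
  fixes k :: "real \<Rightarrow> real"
  assumes nonneg: "\<And>t. t \<noteq> 0 \<Longrightarrow> 0 \<le> k t"
    and C2_1: "\<And>t. t \<noteq> 0 \<Longrightarrow> k differentiable (at t)"
    and C2_2: "\<And>t. t \<noteq> 0 \<Longrightarrow> deriv k differentiable (at t)"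
    and C2_3: "continuous_on (- {0}) (deriv (deriv k))"
    and bnd: "\<And>m n. m \<le> 2 \<Longrightarrow> n \<le> 2 \<Longrightarrow>
               bounded ((\<lambda>t. (1 + t^2) ^ m * (deriv ^^ n) k t) ` (- {0}))"
    and incr: "mono_on {..<0} k"
    and decr: "antimono_on {0<..} k"
    and pos: "\<And>t. t \<noteq> 0 \<Longrightarrow> 0 < k t"
  shows "strict_mono (Pk k) \<and> (\<exists>g. homeomorphism UNIV UNIV (Pk k) g)"
proof -
  have "bounded ((\<lambda>t. (1 + t^2) ^ 2 * k t) ` (- {0}))"
    using bnd[of 2 0] by simp
  then obtain B where decay: "\<And>t. t \<noteq> 0 \<Longrightarrow> \<bar>(1 + t^2)^2 * k t\<bar> \<le> B"
    unfolding bounded_iff by auto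
  have "continuous_on (- {0}) k"
    using C2_1 by (intro continuous_at_imp_continuous_on) (auto intro: differentiable_imp_continuous_within)
  then interpret unimodal_kernel k
    using integrable_of_inverse_square_decay[OF _ decay] pos incr decr by unfold_locales auto
  show ?thesis
    using strict_mono_Pk homeomorphism_into_1d[OF path_connected_UNIV continuous_on_Pk surj_Pk
        strict_mono_imp_inj_on[OF strict_mono_Pk]]
    by blast
qed

end
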